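(* Let $f: \mathbb{T} \to \mathbb{T}$ be as in the context. Assume $\rho(f) = p/q$, with $p,q$ coprime positive integers, or $p=0$, $q=1$. If $q$ is even then $f^q=\mathrm{id}$, that is, all orbits are periodic with primitive period $q$; moreover, $a_0$ and $a_1$ are in the same periodic orbit. If $q$ is odd then, for any non-degenerate interval $I \subset \mathbb{T}$, $f^q|_I \ne \mathrm{id}|_I$; also $a_0$ and $a_1$ are not in the same periodic orbit.
   Context: Setting: the internal-wave billiard (unit-speed point particle, reflected so that angles of incident and reflected velocities with the vertical are equal) in a rectangular trapezoid of height $1/2$ with horizontal bases, vertical left leg, shorter base of length $\ell>0$, and slanted leg making angle $\alpha$ as in the paper's convention; the initial direction $\theta$ (angle with the vertical, particle starting on the vertical leg) satisfies $\alpha<\theta<\pi/2$ and $\theta\ge\arctan(2\ell+\tan\alpha)$. $f:\mathbb{T}\to\mathbb{T}$ ($\mathbb{T}=\mathbb{R}/\mathbb{Z}\cong[-1/2,1/2)$) is the first-return map of the unfolded linear flow to a horizontal cross-section of length 1; it is an orientation-preserving piecewise-linear circle homeomorphism whose derivative takes only the values $\Lambda$ and $\Lambda^{-1}$, $\Lambda=\sin(\theta+\alpha)/\sin(\theta-\alpha)>1$. Its two break points are $a_0=(\tan\theta-2\ell)/(2\tan\theta)\in(0,1/2)$ (where $f'$ jumps up from $\Lambda^{-1}$ to $\Lambda$) and $a_1=-(2\ell+\tan\alpha)/(2\tan\theta)\in(-1/2,0)$ (where $f'$ jumps down), with $f(a_j)=-a_j$. $\rho(f)\in[0,1)$ is the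 Poincaré rotation number. *)

theory Defs
  imports "HOL-Analysis.Analysis"
begin

text \<open>The circle T = R/Z is handled through lifts to R: a point of T is represented
by any real number, and two reals represent the same point iff their difference is
an integer.\<close>

definition iw_Lambda :: "real \<Rightarrow> real \<Rightarrow> real" where
  "iw_Lambda \<alpha> \<theta> = sin (\<theta> + \<alpha>) / sin (\<theta> - \<alpha>)"

definition iw_a0 :: "real \<Rightarrow> real \<Rightarrow> real" where
  "iw_a0 l \<theta> = (tan \<theta> - 2 * l) / (2 * tan \<theta>)"

definition iw_a1 :: "real \<Rightarrow> real \<Rightarrow> real \<Rightarrow> real" where
  "iw_a1 l \<alpha> \<theta> = - (2 * l + tan \<alpha>) / (2 * tan \<theta>)"

text \<open>On the arc [a1, a0] (through 0) f has slope 1/Lambda and f(a1) = -a1; on the arc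
[a0, a1+1] it has slope Lambda and f(a0) = -a0 (mod 1).\<close>

definition iw_lift :: "real \<Rightarrow> real \<Rightarrow> real \<Rightarrow> real \<Rightarrow> real" where
  "iw_lift l \<alpha> \<theta> x =
     (let a0 = iw_a0 l \<theta>; a1 = iw_a1 l \<alpha> \<theta>; \<Lambda> = iw_Lambda \<alpha> \<theta>;
          n = \<lfloor>x - a1\<rfloor>; y = x - of_int n
      in of_int n + (if y \<le> a0 then - a1 + (y - a1) / \<Lambda>
                     else 1 - a0 + \<Lambda> * (y - a0)))"

definition rot_number :: "(real \<Rightarrow> real) \<Rightarrow> real" where
  "rot_number F = frac (lim (\<lambda>n. (F ^^ n) 0 / real n))"

definition same_pt :: "real \<Rightarrow> real \<Rightarrow> bool" where
  "same_pt x y \<longleftrightarrow> x - y \<in> \<int>"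

end

theory Submission
  imports Defs
begin

text \<open>The lift \<open>F\<close> is reversible, \<open>F (- F x) = - x\<close>: the maps \<open>x \<mapsto> c - F x\<close> (\<open>c\<close> an integer)
  are orientation-reversing involutions conjugating \<open>F\<close> to its inverse, and their fixed points are
  exactly the break points \<open>a1\<close>, \<open>a0\<close> modulo 1. As \<open>F\<close> has slopes \<open>L\<close> and \<open>1/L\<close>, the right slope
  of \<open>F^n\<close> at \<open>x\<close> is \<open>L^e\<close>, where \<open>e\<close> counts the visits of the first \<open>n\<close> iterates to the
  expanding arc minus those to the contracting arc; \<open>e \<equiv> n (mod 2)\<close>.

  For odd \<open>q\<close>, \<open>e \<noteq> 0\<close>, so \<open>F^q\<close> is nowhere locally a translation; and \<open>F^k a0 \<equiv> a1\<close> would by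
  reversibility give \<open>F^(2k) a0 = a0 + 2m - 1\<close>, a rotation number with odd numerator over an even
  denominator.

  For \<open>q = 2s\<close> the numerator \<open>P\<close> is odd. If \<open>a0\<close> is periodic, reversibility sends it by \<open>F^s\<close>
  to \<open>a1 + j\<close>, so \<open>F^s\<close> exchanges the two arcs, \<open>e = 0\<close> for \<open>F^q\<close> everywhere, and \<open>F^q\<close> is the
  translation by \<open>P\<close>. If \<open>a0\<close> were not periodic, the gap \<open>(u, v)\<close> of the periodic set around \<open>a0\<close>
  would be symmetric under \<open>x \<mapsto> 1 - F x\<close> and carried by \<open>F^s\<close> to the gap around \<open>a1\<close>; again
  \<open>F^s\<close> exchanges the arcs along the orbit of \<open>u\<close>, so \<open>F^q\<close> is a translation just right of \<open>u\<close>,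
  contradicting the gap.\<close>

section \<open>One-sided slopes and gaps of closed sets\<close>

definition right_slope :: "(real \<Rightarrow> real) \<Rightarrow> real \<Rightarrow> real \<Rightarrow> bool" where
  "right_slope f c x \<longleftrightarrow> (\<exists>\<delta>>0. \<forall>y. x \<le> y \<and> y \<le> x + \<delta> \<longrightarrow> f y - f x = c * (y - x))"

lemma right_slope_comp:
  assumes f: "right_slope f c x" and g: "right_slope g d (f x)" and c: "c > 0"
  shows "right_slope (g \<circ> f) (d * c) x"
proof -
  obtain \<delta>\<^sub>1 where \<delta>\<^sub>1: "\<delta>\<^sub>1 > 0" "\<And>y. x \<le> y \<Longrightarrow> y \<le> x + \<delta>\<^sub>1 \<Longrightarrow> f y - f x = c * (y - x)"
    using f unfolding right_slope_def by blast
  obtain \<delta>\<^sub>2 where \<delta>\<^sub>2: "\<delta>\<^sub>2 > 0"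
      "\<And>z. f x \<le> z \<Longrightarrow> z \<le> f x + \<delta>\<^sub>2 \<Longrightarrow> g z - g (f x) = d * (z - f x)"
    using g unfolding right_slope_def by blast
  have "(g \<circ> f) y - (g \<circ> f) x = d * c * (y - x)"
    if "x \<le> y" "y \<le> x + min \<delta>\<^sub>1 (\<delta>\<^sub>2 / c)" for y
  proof -
    have y: "y \<le> x + \<delta>\<^sub>1" "y - x \<le> \<delta>\<^sub>2 / c" using that by (auto simp: min_def split: if_splits)
    have fy: "f y = f x + c * (y - x)" using \<delta>\<^sub>1(2)[of y] that y by simp
    have "c * (y - x) \<le> c * (\<delta>\<^sub>2 / c)" using y c by (intro mult_left_mono) auto
    then have "c * (y - x) \<le> \<delta>\<^sub>2" using c by simp
    then show ?thesis using \<delta>\<^sub>2(2)[of "f y"] fy that c by simp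
  qed
  then show ?thesis unfolding right_slope_def using \<delta>\<^sub>1(1) \<delta>\<^sub>2(1) c
    by (intro exI[of _ "min \<delta>\<^sub>1 (\<delta>\<^sub>2 / c)"]) auto
qed

lemma right_slope_ne_1_imp_displacement_not_Ints:
  assumes g: "right_slope g c a" and "c \<noteq> 1" and "a < b"
  shows "\<exists>x\<in>{a..b}. g x - x \<notin> \<int>"
proof (rule ccontr)
  assume "\<not> ?thesis"
  then have Ints: "g x - x \<in> \<int>" if "a \<le> x" "x \<le> b" for x
    using that by auto
  obtain \<delta> where \<delta>: "\<delta> > 0" "\<And>y. a \<le> y \<Longrightarrow> y \<le> a + \<delta> \<Longrightarrow> g y - g a = c * (y - a)"
    using g unfolding right_slope_def by blast
  \<comment> \<open>a step \<open>t\<close> so small that the displacement changes by a nonzero amount less than 1\<close>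
  define t where "t = min (min \<delta> (b - a)) (1 / (2 * \<bar>c - 1\<bar>))"
  have t: "0 < t" "t \<le> \<delta>" "t \<le> b - a"
    using \<delta>(1) assms(2,3) by (simp_all add: t_def)
  have "\<bar>c - 1\<bar> * t \<le> \<bar>c - 1\<bar> * (1 / (2 * \<bar>c - 1\<bar>))"
    unfolding t_def by (intro mult_left_mono) auto
  also have "\<dots> = 1 / 2" using assms(2) by simp
  finally have t_small: "\<bar>c - 1\<bar> * t \<le> 1 / 2" .
  have "(g (a + t) - (a + t)) - (g a - a) = (c - 1) * t"
    using \<delta>(2)[of "a + t"] t by (simp add: algebra_simps)
  moreover have "(g (a + t) - (a + t)) - (g a - a) \<in> \<int>"
    by (rule Ints_diff) (use Ints t assms(3) in auto)
  ultimately have "1 \<le> \<bar>(c - 1) * t\<bar>"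
    using t(1) assms(2) by (intro Ints_nonzero_abs_ge1) auto
  moreover have "\<bar>(c - 1) * t\<bar> = \<bar>c - 1\<bar> * t" using t(1) by (simp add: abs_mult)
  ultimately show False using t_small by linarith
qed

lemma right_slope_1_imp_displacement_eq:
  assumes cont: "continuous_on UNIV g" and slope: "\<And>x. right_slope g 1 x" and "a \<le> b"
  shows "g b - b = g a - a"
proof -
  define h where "h x = g x - x" for x
  define T where "T = {a..b} \<inter> {t. h t = h a}"
  have "closed {t. h t = h a}"
    unfolding h_def by (intro closed_Collect_eq continuous_intros cont)
  then have "closed T" unfolding T_def by (intro closed_Int closed_atLeastAtMost)
  moreover have "a \<in> T" "bdd_above T" using \<open>a \<le> b\<close> unfolding T_def by auto
  ultimately have "Sup T \<in> T" by (intro closed_contains_Sup) auto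
  then have c: "a \<le> Sup T" "Sup T \<le> b" "h (Sup T) = h a" unfolding T_def by auto
  have "Sup T = b"
  proof (rule ccontr)
    assume "Sup T \<noteq> b"
    obtain \<delta> where \<delta>: "\<delta> > 0"
        "\<And>y. Sup T \<le> y \<Longrightarrow> y \<le> Sup T + \<delta> \<Longrightarrow> g y - g (Sup T) = y - Sup T"
      using slope[of "Sup T"] unfolding right_slope_def by auto
    define y where "y = Sup T + min \<delta> (b - Sup T)"
    have y: "Sup T < y" "y \<le> b" "y \<le> Sup T + \<delta>"
      using \<delta>(1) c \<open>Sup T \<noteq> b\<close> by (auto simp: y_def min_def)
    then have "h y = h a" using \<delta>(2)[of y] c unfolding h_def by simp
    then have "y \<in> T" using y c unfolding T_def by simp
    then have "y \<le> Sup T" using \<open>bdd_above T\<close> by (rule cSup_upper)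
    then show False using y by simp
  qed
  then show ?thesis using c unfolding h_def by simp
qed

lemma abs_le_inverse_nat_imp_zero:
  fixes z :: real
  assumes "\<And>n::nat. n > 0 \<Longrightarrow> \<bar>z\<bar> \<le> inverse (real n)"
  shows "z = 0"
proof (rule ccontr)
  assume "z \<noteq> 0"
  then obtain n :: nat where "n > 0" "inverse (real n) < \<bar>z\<bar>"
    using ex_inverse_of_nat_less[of "\<bar>z\<bar>"] by auto
  then show False using assms[OF \<open>n > 0\<close>] by linarith
qed

lemma cross_mult_eq_if_frac_eq:
  assumes "k \<noteq> 0" "q \<noteq> 0" "of_int c / real k = of_int P / real q"
  shows "c * int q = P * int k"
proof -
  have "of_int c * real q = of_int P * real k" using assms by (simp add: field_simps)
  then have "real_of_int (c * int q) = real_of_int (P * int k)" by simp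
  then show ?thesis by (simp only: of_int_eq_iff)
qed

lemma gap_around_point:
  fixes Z :: "real set"
  assumes "closed Z" and "z \<in> Z" and shift: "\<And>z k. z \<in> Z \<Longrightarrow> z + of_int k \<in> Z" and "c \<notin> Z"
  obtains u v where "u \<in> Z" "v \<in> Z" "u < c" "c < v" "\<And>w. w \<in> Z \<Longrightarrow> w \<le> u \<or> v \<le> w"
proof -
  define Z\<^sub>l where "Z\<^sub>l = Z \<inter> {..c}"
  define Z\<^sub>r where "Z\<^sub>r = Z \<inter> {c..}"
  have "z + of_int (- \<lceil>z - c\<rceil>) \<le> c" "c \<le> z + of_int \<lceil>c - z\<rceil>"
    using le_of_int_ceiling[of "z - c"] le_of_int_ceiling[of "c - z"] by linarith+
  then have "z + of_int (- \<lceil>z - c\<rceil>) \<in> Z\<^sub>l" "z + of_int \<lceil>c - z\<rceil> \<in> Z\<^sub>r"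
    using shift[OF \<open>z \<in> Z\<close>, of "- \<lceil>z - c\<rceil>"] shift[OF \<open>z \<in> Z\<close>, of "\<lceil>c - z\<rceil>"]
    unfolding Z\<^sub>l_def Z\<^sub>r_def by auto
  moreover have "closed Z\<^sub>l" "closed Z\<^sub>r" "bdd_above Z\<^sub>l" "bdd_below Z\<^sub>r"
    using \<open>closed Z\<close> unfolding Z\<^sub>l_def Z\<^sub>r_def by (auto intro: closed_Int)
  ultimately have "Sup Z\<^sub>l \<in> Z\<^sub>l" "Inf Z\<^sub>r \<in> Z\<^sub>r"
    by (auto intro!: closed_contains_Sup closed_contains_Inf)
  moreover have "w \<le> Sup Z\<^sub>l \<or> Inf Z\<^sub>r \<le> w" if "w \<in> Z" for w
    using that \<open>bdd_above Z\<^sub>l\<close> \<open>bdd_below Z\<^sub>r\<close> unfolding Z\<^sub>l_def Z\<^sub>r_def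
    by (cases "w \<le> c") (auto intro: cSup_upper cInf_lower)
  ultimately show ?thesis
    using that[of "Sup Z\<^sub>l" "Inf Z\<^sub>r"] \<open>c \<notin> Z\<close> unfolding Z\<^sub>l_def Z\<^sub>r_def
    by (metis IntD1 IntD2 atLeast_iff atMost_iff order_le_less)
qed

lemma involution_swaps_gap_ends:
  fixes \<tau> :: "real \<Rightarrow> real"
  assumes decreasing: "\<And>x y. x < y \<Longrightarrow> \<tau> y < \<tau> x" and involution: "\<And>x. \<tau> (\<tau> x) = x"
    and invariant: "\<And>z. z \<in> Z \<Longrightarrow> \<tau> z \<in> Z" and fixed: "\<tau> c = c"
    and gap: "u \<in> Z" "v \<in> Z" "u < c" "c < v" "\<And>w. w \<in> Z \<Longrightarrow> w \<le> u \<or> v \<le> w"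
  shows "\<tau> u = v"
proof -
  have "c < \<tau> u" using decreasing[OF \<open>u < c\<close>] fixed by simp
  then have "v \<le> \<tau> u" using gap(5)[OF invariant[OF \<open>u \<in> Z\<close>]] \<open>u < c\<close> by linarith
  have "\<tau> v < c" using decreasing[OF \<open>c < v\<close>] fixed by simp
  then have "\<tau> v \<le> u" using gap(5)[OF invariant[OF \<open>v \<in> Z\<close>]] \<open>c < v\<close> by linarith
  show ?thesis
  proof (rule ccontr)
    assume "\<tau> u \<noteq> v"
    with \<open>v \<le> \<tau> u\<close> have "u < \<tau> v" using decreasing[of v "\<tau> u"] involution[of u] by simp
    then show False using \<open>\<tau> v \<le> u\<close> by simp
  qed
qed

section \<open>Lifts of circle homeomorphisms and the rotation number\<close>

locale circle_lift =
  fixes F :: "real \<Rightarrow> real"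
  assumes F_strict_mono: "strict_mono F"
    and F_continuous: "continuous_on UNIV F"
    and F_shift: "F (x + of_int k) = F x + of_int k"
begin

lemma funpow_shift: "(F ^^ n) (x + of_int k) = (F ^^ n) x + of_int k"
  by (induction n) (simp_all add: F_shift)

lemma funpow_strict_mono: "strict_mono (F ^^ n)"
  by (induction n) (auto simp: strict_mono_def F_strict_mono[THEN strict_monoD])

lemma funpow_less_iff: "(F ^^ n) x < (F ^^ n) y \<longleftrightarrow> x < y"
  using funpow_strict_mono by (rule strict_mono_less)

lemma funpow_le_iff: "(F ^^ n) x \<le> (F ^^ n) y \<longleftrightarrow> x \<le> y"
  using funpow_strict_mono by (rule strict_mono_less_eq)

lemma funpow_eq_iff: "(F ^^ n) x = (F ^^ n) y \<longleftrightarrow> x = y"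
  using funpow_strict_mono by (rule strict_mono_eq)

lemma continuous_on_funpow: "continuous_on UNIV (F ^^ n)"
proof (induction n)
  case (Suc n)
  have "continuous_on UNIV ((F ^^ n) \<circ> F)"
    by (intro continuous_on_compose F_continuous continuous_on_subset[OF Suc.IH]) auto
  then show ?case by (simp del: funpow.simps add: funpow_Suc_right)
qed (simp add: continuous_on_id)

lemma funpow_commute: "(F ^^ m) ((F ^^ n) x) = (F ^^ n) ((F ^^ m) x)"
proof -
  have "(F ^^ m) ((F ^^ n) x) = (F ^^ (m + n)) x" by (simp only: funpow_add o_apply)
  also have "\<dots> = (F ^^ (n + m)) x" by (simp only: add.commute)
  also have "\<dots> = (F ^^ n) ((F ^^ m) x)" by (simp only: funpow_add o_apply)
  finally show ?thesis .
qed

lemma displacement_diff_le_1: "\<bar>((F ^^ n) x - x) - ((F ^^ n) y - y)\<bar> \<le> 1"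
proof -
  have "\<bar>((F ^^ n) x - x) - ((F ^^ n) y - y)\<bar> \<le> 1" if "y \<le> x" for x y
  proof -
    define k where "k = \<lfloor>x - y\<rfloor>"
    have k: "y + of_int k \<le> x" "x \<le> y + of_int (k + 1)" unfolding k_def by linarith+
    have "(F ^^ n) y + of_int k \<le> (F ^^ n) x" "(F ^^ n) x \<le> (F ^^ n) y + of_int (k + 1)"
      using k[THEN funpow_le_iff[THEN iffD2]] by (simp_all only: funpow_shift)
    then show ?thesis using k by (simp add: abs_le_iff)
  qed
  from this[of y x] this[of x y] show ?thesis
    by (cases "y \<le> x") (simp_all add: abs_minus_commute)
qed

lemma funpow_mult_0_bound: "\<bar>(F ^^ (m * k)) 0 - real k * (F ^^ m) 0\<bar> \<le> real k"
proof (induction k)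
  case (Suc k)
  have "(F ^^ (m * Suc k)) 0 = (F ^^ m) ((F ^^ (m * k)) 0)"
    by (simp only: mult_Suc_right funpow_add o_apply)
  then show ?case
    using Suc displacement_diff_le_1[of m "(F ^^ (m * k)) 0" 0] by (simp add: abs_le_iff algebra_simps)
qed simp

lemma rotation_quotients_close:
  assumes "m > 0" "n > 0"
  shows "\<bar>(F ^^ m) 0 / m - (F ^^ n) 0 / n\<bar> \<le> 1 / m + 1 / n"
proof -
  have "\<bar>(F ^^ (m * n)) 0 / (m * n) - (F ^^ m) 0 / m\<bar> \<le> 1 / m"
    if "m > 0" "n > 0" for m n :: nat
  proof -
    have "\<bar>(F ^^ (m * n)) 0 / (m * n) - (F ^^ m) 0 / m\<bar>
        = \<bar>(F ^^ (m * n)) 0 - real n * (F ^^ m) 0\<bar> / (m * n)"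
      using that by (simp add: field_simps abs_divide)
    also have "\<dots> \<le> real n / (m * n)"
      by (rule divide_right_mono[OF funpow_mult_0_bound]) simp
    finally show ?thesis using that by simp
  qed
  note close = this[of m n, OF assms] this[of n m, OF assms(2,1)]
  have "(F ^^ (n * m)) 0 / (n * m) = (F ^^ (m * n)) 0 / (m * n)"
    by (simp only: mult.commute)
  then show ?thesis using close assms by linarith
qed

definition rho :: real where "rho = lim (\<lambda>n. (F ^^ n) 0 / real n)"

lemma LIMSEQ_rho: "(\<lambda>n. (F ^^ n) 0 / real n) \<longlonglongrightarrow> rho"
proof -
  have "Cauchy (\<lambda>n. (F ^^ n) 0 / real n)"
  proof (rule CauchyI)
    fix e :: real assume "0 < e"
    then obtain M :: nat where M: "M > 0" "inverse (real M) < e / 2"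
      using ex_inverse_of_nat_less[of "e / 2"] by auto
    have "\<bar>(F ^^ m) 0 / m - (F ^^ n) 0 / n\<bar> < e" if "M \<le> m" "M \<le> n" for m n
    proof -
      have "1 / real m \<le> 1 / M" "1 / real n \<le> 1 / M"
        using that M(1) by (simp_all add: frac_le)
      moreover have "1 / real M < e / 2" using M(2) by (simp add: inverse_eq_divide)
      ultimately show ?thesis using rotation_quotients_close[of m n] that M(1) by linarith
    qed
    then show "\<exists>M. \<forall>m\<ge>M. \<forall>n\<ge>M. norm ((F ^^ m) 0 / m - (F ^^ n) 0 / n) < e" by auto
  qed
  then show ?thesis unfolding rho_def by (simp add: Cauchy_convergent_iff convergent_LIMSEQ_iff)
qed

lemma funpow_mult_displacement_bounds:
  assumes "\<And>x. m \<le> (F ^^ q) x - x \<and> (F ^^ q) x - x \<le> M"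
  shows "real t * m \<le> (F ^^ (q * t)) 0 \<and> (F ^^ (q * t)) 0 \<le> real t * M"
proof (induction t)
  case (Suc t)
  have "(F ^^ (q * Suc t)) 0 = (F ^^ q) ((F ^^ (q * t)) 0)"
    by (simp only: mult_Suc_right funpow_add o_apply)
  then show ?case using Suc assms[of "(F ^^ (q * t)) 0"] by (simp add: algebra_simps)
qed simp

lemma rho_bounded_by_displacement:
  assumes "q > 0" and "\<And>x. m \<le> (F ^^ q) x - x \<and> (F ^^ q) x - x \<le> M"
  shows "m \<le> q * rho \<and> q * rho \<le> M"
proof -
  have "strict_mono (\<lambda>t. q * t)" using assms(1) by (simp add: strict_mono_def)
  from LIMSEQ_subseq_LIMSEQ[OF LIMSEQ_rho this]
  have lim: "(\<lambda>t. (F ^^ (q * t)) 0 / real (q * t)) \<longlonglongrightarrow> rho" by (simp add: o_def)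
  have bounds: "m / q \<le> (F ^^ (q * t)) 0 / real (q * t) \<and> (F ^^ (q * t)) 0 / real (q * t) \<le> M / q"
    if "t > 0" for t
  proof
    note iterate_bounds = funpow_mult_displacement_bounds[OF assms(2), of t]
    have "m / q = real t * m / real (q * t)" using that by simp
    also have "\<dots> \<le> (F ^^ (q * t)) 0 / real (q * t)" by (rule divide_right_mono) (use iterate_bounds in auto)
    finally show "m / q \<le> (F ^^ (q * t)) 0 / real (q * t)" .
    have "(F ^^ (q * t)) 0 / real (q * t) \<le> real t * M / real (q * t)"
      by (rule divide_right_mono) (use iterate_bounds in auto)
    also have "\<dots> = M / q" using that by simp
    finally show "(F ^^ (q * t)) 0 / real (q * t) \<le> M / q" .
  qed
  have "\<exists>N. \<forall>t\<ge>N. m / q \<le> (F ^^ (q * t)) 0 / real (q * t)"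
    using bounds by (auto intro!: exI[of _ 1])
  then have "m / q \<le> rho" by (rule LIMSEQ_le_const[OF lim])
  have "\<exists>N. \<forall>t\<ge>N. (F ^^ (q * t)) 0 / real (q * t) \<le> M / q"
    using bounds by (auto intro!: exI[of _ 1])
  then have "rho \<le> M / q" by (rule LIMSEQ_le_const2[OF lim])
  then have "rho * q \<le> M" using assms(1) by (simp add: pos_le_divide_eq)
  moreover have "m \<le> rho * q" using \<open>m / q \<le> rho\<close> assms(1) by (simp add: pos_divide_le_eq)
  ultimately show ?thesis by (simp only: mult.commute[of "real q"])
qed

lemma funpow_mult_periodic:
  assumes "(F ^^ N) x = x + of_int c"
  shows "(F ^^ (N * t)) x = x + of_int (int t * c)"
proof (induction t)
  case (Suc t)
  have "(F ^^ (N * Suc t)) x = (F ^^ N) ((F ^^ (N * t)) x)"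
    by (simp only: mult_Suc_right funpow_add o_apply)
  then show ?case using Suc assms funpow_shift[of N x "int t * c"] by (simp add: algebra_simps)
qed simp

lemma rho_eq_if_periodic:
  assumes "N > 0" and "(F ^^ N) x = x + of_int c"
  shows "rho = of_int c / N"
proof -
  have "\<bar>N * rho - c\<bar> \<le> inverse (real t)" if "t > 0" for t :: nat
  proof -
    have disp: "real t * c - 1 \<le> (F ^^ (N * t)) y - y \<and> (F ^^ (N * t)) y - y \<le> real t * c + 1"
      for y
      using displacement_diff_le_1[of "N * t" y x] funpow_mult_periodic[OF assms(2), of t]
      by (simp add: abs_le_iff)
    have "real t * c - 1 \<le> (N * t) * rho \<and> (N * t) * rho \<le> real t * c + 1"
      using rho_bounded_by_displacement[OF _ disp] assms(1) that by simp
    moreover have "real (N * t) * rho - real t * c = real t * (N * rho - c)"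
      by (simp add: algebra_simps)
    ultimately have "\<bar>real t * (N * rho - c)\<bar> \<le> 1" by linarith
    then have "real t * \<bar>N * rho - c\<bar> \<le> 1" by (simp add: abs_mult)
    then show ?thesis using that by (simp add: inverse_eq_divide le_divide_eq mult.commute)
  qed
  then have "N * rho - c = 0" by (rule abs_le_inverse_nat_imp_zero)
  then show ?thesis using assms(1) by (simp add: field_simps)
qed

lemma periodic_point_exists:
  assumes "q > 0" and "rho = of_int P / q"
  obtains x where "(F ^^ q) x = x + of_int P"
proof -
  define g where "g x = (F ^^ q) x - x" for x
  have g_cont: "continuous_on A g" for A
    unfolding g_def by (intro continuous_intros continuous_on_subset[OF continuous_on_funpow]) auto
  have g_frac: "g x = g (frac x)" for x
    unfolding g_def frac_def using funpow_shift[of q "x - of_int \<lfloor>x\<rfloor>" "\<lfloor>x\<rfloor>"] by simp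
  have frac_in: "frac x \<in> {0..1}" for x by (simp add: frac_lt_1 less_imp_le)
  obtain x\<^sub>m where "\<forall>y\<in>{0..1}. g x\<^sub>m \<le> g y"
    using continuous_attains_inf[of "{0..1::real}" g] g_cont by auto
  moreover obtain x\<^sub>M where "\<forall>y\<in>{0..1}. g y \<le> g x\<^sub>M"
    using continuous_attains_sup[of "{0..1::real}" g] g_cont by auto
  ultimately have "g x\<^sub>m \<le> g y \<and> g y \<le> g x\<^sub>M" for y
    using g_frac[of y] frac_in[of y] by auto
  then have P: "g x\<^sub>m \<le> P" "P \<le> g x\<^sub>M"
    using rho_bounded_by_displacement[of q "g x\<^sub>m" "g x\<^sub>M"] assms unfolding g_def by simp_all
  have "\<exists>x. g x = P"
  proof (cases "x\<^sub>m \<le> x\<^sub>M")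
    case True
    then show ?thesis using IVT'[OF P True g_cont] by blast
  next
    case False
    then show ?thesis using IVT2'[OF P _ g_cont] by auto
  qed
  then obtain x where "g x = P" by blast
  then have "(F ^^ q) x = x + of_int P" unfolding g_def by linarith
  then show ?thesis by (rule that)
qed

lemma displacement_not_Ints_below_period:
  assumes "rho = of_int P / q" and "coprime P (int q)" and "0 < k" and "k < q"
  shows "(F ^^ k) x - x \<notin> \<int>"
proof
  assume "(F ^^ k) x - x \<in> \<int>"
  then obtain c where "(F ^^ k) x - x = of_int c" by (rule Ints_cases)
  then have "(F ^^ k) x = x + of_int c" by simp
  then have "of_int c / real k = of_int P / real q" using rho_eq_if_periodic assms by simp
  then have "c * int q = P * int k" using assms(3,4) by (intro cross_mult_eq_if_frac_eq) auto
  then have "int q dvd P * int k" by (metis dvd_triv_right)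
  then have "int q dvd int k"
    using coprime_dvd_mult_right_iff[of "int q" P "int k"] assms(2) by (simp add: coprime_commute)
  then show False using nat_dvd_not_less[OF assms(3,4)] by simp
qed

lemma rho_eq_of_rot_number:
  assumes "rot_number F = real p / real q" and "q > 0"
  shows "rho = of_int (\<lfloor>rho\<rfloor> * int q + int p) / q"
proof -
  have "rho - of_int \<lfloor>rho\<rfloor> = real p / real q"
    using assms(1) unfolding rot_number_def rho_def[symmetric] frac_def .
  then show ?thesis using assms(2) by (simp add: field_simps)
qed

end

section \<open>The reversible lift with two break points\<close>

locale break_lift =
  fixes a0 a1 L :: real and F :: "real \<Rightarrow> real"
  assumes L_gt_1: "L > 1" and a1_less_a0: "a1 < a0" and a0_less_a1_plus_1: "a0 < a1 + 1"
    and arc_balance: "a0 - a1 = L * (1 - (a0 - a1))"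
      \<comment> \<open>continuity at the breaks: slope \<open>1/L\<close> on \<open>[a1, a0]\<close>, slope \<open>L\<close> on \<open>[a0, a1 + 1]\<close>\<close>
    and F_eq: "F x = of_int \<lfloor>x - a1\<rfloor> + (if x - of_int \<lfloor>x - a1\<rfloor> \<le> a0
        then - a1 + (x - of_int \<lfloor>x - a1\<rfloor> - a1) / L
        else 1 - a0 + L * (x - of_int \<lfloor>x - a1\<rfloor> - a0))"
begin

lemma arc_balance_div: "(a0 - a1) / L = 1 - (a0 - a1)"
  using arc_balance L_gt_1 by (auto simp: field_simps)

lemma F_contracting_arc:
  assumes "a1 + of_int n \<le> x" "x \<le> a0 + of_int n"
  shows "F x = of_int n - a1 + (x - of_int n - a1) / L"
proof -
  have "\<lfloor>x - a1\<rfloor> = n" using assms a0_less_a1_plus_1 by (intro floor_unique) auto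
  then show ?thesis using assms by (simp add: F_eq)
qed

lemma F_expanding_arc:
  assumes "a0 + of_int n \<le> x" "x \<le> a1 + of_int n + 1"
  shows "F x = of_int n + 1 - a0 + L * (x - of_int n - a0)"
proof (cases "x = a1 + of_int n + 1")
  case True
  then have "F x = of_int (n + 1) - a1 + (x - of_int (n + 1) - a1) / L"
    using F_contracting_arc[of "n + 1" x] a1_less_a0 by simp
  then show ?thesis using True arc_balance by (simp add: algebra_simps)
next
  case False
  then have n: "\<lfloor>x - a1\<rfloor> = n" using assms a1_less_a0 by (intro floor_unique) auto
  show ?thesis
  proof (cases "x = a0 + of_int n")
    case True
    then show ?thesis using n arc_balance_div by (simp add: F_eq algebra_simps)
  qed (use n assms in \<open>simp add: F_eq\<close>)
qed

lemma F_shift: "F (x + of_int k) = F x + of_int k"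
proof -
  have "\<lfloor>x + of_int k - a1\<rfloor> = \<lfloor>x - a1\<rfloor> + k"
    by (metis add.commute add_diff_eq floor_add_int)
  then show ?thesis by (simp add: F_eq)
qed

lemma F_a1_plus_int: "F (a1 + of_int k) = of_int k - a1"
  using F_contracting_arc[of k "a1 + of_int k"] a1_less_a0 by simp

lemma F_a1: "F a1 = - a1"
  using F_a1_plus_int[of 0] by simp

lemma F_a0: "F a0 = 1 - a0"
  using F_contracting_arc[of 0 a0] a1_less_a0 arc_balance_div by (simp add: algebra_simps)

definition slope_bounded :: "real \<Rightarrow> real \<Rightarrow> bool" where
  "slope_bounded x y \<longleftrightarrow> (y - x) / L \<le> F y - F x \<and> F y - F x \<le> L * (y - x)"

lemma slope_bounded_trans: "slope_bounded x y \<Longrightarrow> slope_bounded y z \<Longrightarrow> slope_bounded x z"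
  unfolding slope_bounded_def by (simp add: diff_divide_distrib algebra_simps)

lemma slope_bounded_if_linear:
  assumes "x \<le> y" "F y - F x = c * (y - x)" "1 / L \<le> c" "c \<le> L"
  shows "slope_bounded x y"
proof -
  have "(y - x) / L \<le> c * (y - x)"
    using mult_right_mono[OF assms(3), of "y - x"] assms(1) by simp
  moreover have "c * (y - x) \<le> L * (y - x)"
    using mult_right_mono[OF assms(4), of "y - x"] assms(1) by simp
  ultimately show ?thesis using assms(2) unfolding slope_bounded_def by simp
qed

lemma slope_bounded_within_cell:
  assumes "a1 + of_int n \<le> x" "x \<le> y" "y \<le> a1 + of_int n + 1"
  shows "slope_bounded x y"
proof -
  have "1 / L < 1" using L_gt_1 by simp
  then have L: "1 / L \<le> 1 / L" "1 / L \<le> L" "L \<le> L" using L_gt_1 by linarith+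
  have contracting: "slope_bounded u w" if "a1 + of_int n \<le> u" "u \<le> w" "w \<le> a0 + of_int n" for u w
    using that L F_contracting_arc[of n u] F_contracting_arc[of n w]
    by (intro slope_bounded_if_linear[of _ _ "1 / L"]) (auto simp: diff_divide_distrib)
  have expanding: "slope_bounded u w" if "a0 + of_int n \<le> u" "u \<le> w" "w \<le> a1 + of_int n + 1" for u w
    using that L F_expanding_arc[of n u] F_expanding_arc[of n w]
    by (intro slope_bounded_if_linear[of _ _ L]) (auto simp: algebra_simps)
  consider "y \<le> a0 + of_int n" | "a0 + of_int n \<le> x" | "x \<le> a0 + of_int n" "a0 + of_int n \<le> y"
    by linarith
  then show ?thesis
  proof cases
    case 3
    then show ?thesis using assms a1_less_a0
      by (intro slope_bounded_trans[OF contracting expanding]) auto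
  qed (use assms contracting expanding a1_less_a0 in auto)
qed

lemma slope_bounded_le:
  assumes "x \<le> y"
  shows "slope_bounded x y"
proof -
  define n where "n = \<lfloor>x - a1\<rfloor>"
  define m where "m = \<lfloor>y - a1\<rfloor>"
  have x: "a1 + of_int n \<le> x" "x < a1 + of_int n + 1" unfolding n_def by linarith+
  have y: "a1 + of_int m \<le> y" "y < a1 + of_int m + 1" unfolding m_def by linarith+
  have "n \<le> m" using assms unfolding n_def m_def by (intro floor_mono) simp
  show ?thesis
  proof (cases "n = m")
    case True
    then show ?thesis using slope_bounded_within_cell[of n x y] x y assms by simp
  next
    case False
    then have "a1 + of_int (n + 1) \<le> a1 + of_int m" using \<open>n \<le> m\<close> by simp
    moreover have "F (a1 + of_int m) - F (a1 + of_int (n + 1)) = 1 * (a1 + of_int m - (a1 + of_int (n + 1)))"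
      unfolding F_a1_plus_int by simp
    moreover have "1 / L \<le> 1" using L_gt_1 by simp
    ultimately have "slope_bounded (a1 + of_int (n + 1)) (a1 + of_int m)"
      using L_gt_1 by (intro slope_bounded_if_linear) auto
    moreover have "slope_bounded x (a1 + of_int (n + 1))"
      using slope_bounded_within_cell[of n x] x by simp
    moreover have "slope_bounded (a1 + of_int m) y"
      using slope_bounded_within_cell[of m _ y] y by simp
    ultimately show ?thesis by (blast intro: slope_bounded_trans)
  qed
qed

lemma F_strict_mono: "strict_mono F"
proof (rule strict_monoI)
  fix x y :: real assume "x < y"
  then have "0 < (y - x) / L" using L_gt_1 by simp
  then show "F x < F y" using slope_bounded_le[of x y] \<open>x < y\<close> unfolding slope_bounded_def by linarith
qed

lemma F_lipschitz: "L-lipschitz_on UNIV F"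
proof (rule lipschitz_onI)
  have "dist (F x) (F y) \<le> L * dist x y" if "x \<le> y" for x y
    using slope_bounded_le[OF that] F_strict_mono[THEN strict_mono_less_eq, of x y] that
    unfolding slope_bounded_def by (simp add: dist_real_def)
  then show "dist (F x) (F y) \<le> L * dist x y" for x y
    by (metis dist_commute linear)
qed (use L_gt_1 in simp)

sublocale circle_lift F
  using F_strict_mono lipschitz_on_continuous_on[OF F_lipschitz] F_shift
  by unfold_locales auto

lemma F_reflection_contracting:
  assumes "a1 + of_int n \<le> x" "x \<le> a0 + of_int n"
  shows "F (- F x) = - x"
proof -
  define d where "d = a0 - a1"
  define t where "t = (x - of_int n - a1) / L"
  have L: "L > 0" "L * (1 - d) = d" using L_gt_1 arc_balance unfolding d_def by simp_all
  have Fx: "F x = of_int n - a1 + t" unfolding t_def using F_contracting_arc[OF assms] by simp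
  have "t \<le> (a0 - a1) / L" unfolding t_def using assms(2) L by (intro divide_right_mono) auto
  then have "0 \<le> t" "t \<le> 1 - d" using assms(1) L arc_balance_div unfolding t_def d_def by simp_all
  then have "a0 + of_int (- n - 1) \<le> - F x" "- F x \<le> a1 + of_int (- n - 1) + 1"
    using Fx unfolding d_def by simp_all
  then have "F (- F x) = of_int (- n - 1) + 1 - a0 + L * (- F x - of_int (- n - 1) - a0)"
    by (rule F_expanding_arc)
  also have "- F x - of_int (- n - 1) - a0 = 1 - d - t" using Fx unfolding d_def by simp
  also have "of_int (- n - 1) + 1 - a0 + L * (1 - d - t) = - of_int n - a0 + L * (1 - d - t)"
    by simp
  also have "\<dots> = - x"
  proof -
    have "L * t = x - of_int n - a1" unfolding t_def using L(1) by simp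
    moreover have "L * (1 - d - t) = L * (1 - d) - L * t" by (simp add: algebra_simps)
    ultimately show ?thesis using L(2) unfolding d_def by linarith
  qed
  finally show ?thesis .
qed

lemma uminus_F_expanding_arc:
  assumes "a0 + of_int n \<le> x" "x \<le> a1 + of_int n + 1"
  shows "a1 + of_int (- n - 1) \<le> - F x" "- F x \<le> a0 + of_int (- n - 1)"
proof -
  have "0 \<le> L * (x - of_int n - a0)" using assms(1) L_gt_1 by simp
  moreover have "L * (x - of_int n - a0) \<le> L * (1 - (a0 - a1))"
    using assms(2) L_gt_1 by (intro mult_left_mono) auto
  ultimately show "a1 + of_int (- n - 1) \<le> - F x" "- F x \<le> a0 + of_int (- n - 1)"
    using F_expanding_arc[OF assms] arc_balance by simp_all
qed

lemma F_reflection: "F (- F x) = - x"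
proof -
  define n where "n = \<lfloor>x - a1\<rfloor>"
  have x: "a1 + of_int n \<le> x" "x \<le> a1 + of_int n + 1" unfolding n_def by linarith+
  show ?thesis
  proof (cases "x \<le> a0 + of_int n")
    case True
    then show ?thesis using F_reflection_contracting x by blast
  next
    case False
    \<comment> \<open>\<open>- F x\<close> lies on a contracting arc, where the first case applies\<close>
    then have "a0 + of_int n \<le> x" by simp
    from F_reflection_contracting[OF uminus_F_expanding_arc[OF this x(2)]]
    have "F (- F (- F x)) = F x" by simp
    then show ?thesis by (simp add: strict_mono_eq[OF F_strict_mono])
  qed
qed

lemma funpow_reflection: "(F ^^ n) (- (F ^^ n) x) = - x"
proof (induction n arbitrary: x)
  case (Suc n)
  have "(F ^^ Suc n) (- (F ^^ Suc n) x) = (F ^^ n) (F (- F ((F ^^ n) x)))"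
    by (simp only: funpow.simps(2) o_apply funpow_swap1)
  then show ?case using F_reflection Suc by simp
qed simp

lemma F_plus_id_strict_mono: "x < y \<Longrightarrow> F x + x < F y + y"
  using F_strict_mono[THEN strict_monoD, of x y] by simp

lemma eq_a1_if_F_eq: "F y = 2 * of_int k - y \<Longrightarrow> y = a1 + of_int k"
  using F_plus_id_strict_mono[of y "a1 + of_int k"] F_plus_id_strict_mono[of "a1 + of_int k" y]
    F_a1_plus_int[of k] by (cases y "a1 + of_int k" rule: linorder_cases) auto

lemma eq_a0_if_F_eq: "F y = 2 * of_int k + 1 - y \<Longrightarrow> y = a0 + of_int k"
  using F_plus_id_strict_mono[of y "a0 + of_int k"] F_plus_id_strict_mono[of "a0 + of_int k" y]
    F_shift[of a0 k] F_a0 by (cases y "a0 + of_int k" rule: linorder_cases) auto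

definition slope_exponent :: "real \<Rightarrow> int" where
  "slope_exponent x = (if x - of_int \<lfloor>x - a1\<rfloor> < a0 then -1 else 1)"

definition orbit_exponent :: "nat \<Rightarrow> real \<Rightarrow> int" where
  "orbit_exponent n x = (\<Sum>i<n. slope_exponent ((F ^^ i) x))"

lemma slope_exponent_shift: "slope_exponent (x + of_int k) = slope_exponent x"
proof -
  have "\<lfloor>x + of_int k - a1\<rfloor> = \<lfloor>x - a1\<rfloor> + k"
    by (metis add.commute add_diff_eq floor_add_int)
  then show ?thesis by (simp add: slope_exponent_def)
qed

lemma slope_exponent_contracting:
  assumes "a1 + of_int k \<le> x" "x < a0 + of_int k"
  shows "slope_exponent x = -1"
proof -
  have "\<lfloor>x - a1\<rfloor> = k" using assms a0_less_a1_plus_1 by (intro floor_unique) auto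
  then show ?thesis using assms by (simp add: slope_exponent_def)
qed

lemma slope_exponent_expanding:
  assumes "a0 + of_int k \<le> x" "x < a1 + of_int k + 1"
  shows "slope_exponent x = 1"
proof -
  have "\<lfloor>x - a1\<rfloor> = k" using assms a1_less_a0 by (intro floor_unique) auto
  then show ?thesis using assms by (simp add: slope_exponent_def)
qed

lemma right_slope_F: "right_slope F (L powr slope_exponent x) x"
proof -
  define n where "n = \<lfloor>x - a1\<rfloor>"
  have x: "a1 + of_int n \<le> x" "x < a1 + of_int n + 1" unfolding n_def by linarith+
  show ?thesis
  proof (cases "x < a0 + of_int n")
    case True
    have "F y - F x = L powr slope_exponent x * (y - x)" if "x \<le> y" "y \<le> a0 + of_int n" for y
      using F_contracting_arc[of n x] F_contracting_arc[of n y] that x True L_gt_1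
        slope_exponent_contracting[OF x(1) True]
      by (simp add: powr_minus_divide diff_divide_distrib)
    then show ?thesis unfolding right_slope_def using True
      by (intro exI[of _ "a0 + of_int n - x"]) auto
  next
    case False
    have "F y - F x = L powr slope_exponent x * (y - x)" if "x \<le> y" "y \<le> a1 + of_int n + 1" for y
      using F_expanding_arc[of n x] F_expanding_arc[of n y] that x False L_gt_1
        slope_exponent_expanding[of n x]
      by (simp add: algebra_simps)
    then show ?thesis unfolding right_slope_def using x
      by (intro exI[of _ "a1 + of_int n + 1 - x"]) auto
  qed
qed

lemma right_slope_funpow: "right_slope (F ^^ n) (L powr orbit_exponent n x) x"
proof (induction n)
  case 0
  then show ?case using L_gt_1 unfolding right_slope_def orbit_exponent_def by (auto intro!: exI[of _ 1])
next
  case (Suc n)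
  have "right_slope (F \<circ> F ^^ n) (L powr slope_exponent ((F ^^ n) x) * L powr orbit_exponent n x) x"
    using Suc right_slope_F L_gt_1 by (intro right_slope_comp) auto
  then show ?case by (simp add: orbit_exponent_def powr_add mult.commute comp_def)
qed

lemma orbit_exponent_parity: "even (orbit_exponent n x + int n)"
proof (induction n)
  case (Suc n)
  then show ?case by (simp add: orbit_exponent_def slope_exponent_def)
qed (simp add: orbit_exponent_def)

lemma orbit_exponent_add:
  "orbit_exponent (m + n) x = orbit_exponent m x + orbit_exponent n ((F ^^ m) x)"
proof (induction n)
  case (Suc n)
  then show ?case by (simp add: orbit_exponent_def funpow_add funpow_commute[of m n x])
qed (simp add: orbit_exponent_def)

lemma slope_exponent_funpow_shift:
  "slope_exponent ((F ^^ n) (z + of_int k)) = slope_exponent ((F ^^ n) z)"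
  by (simp add: funpow_shift slope_exponent_shift)

lemma orbit_exponent_double_eq_0:
  assumes "\<And>i. slope_exponent ((F ^^ s) ((F ^^ i) x)) = - slope_exponent ((F ^^ i) x)"
  shows "orbit_exponent (2 * s) x = 0"
proof -
  have "orbit_exponent s ((F ^^ s) x) = (\<Sum>i<s. - slope_exponent ((F ^^ i) x))"
    unfolding orbit_exponent_def by (intro sum.cong refl) (metis assms funpow_commute)
  then show ?thesis using orbit_exponent_add[of s s x] by (simp add: mult_2 orbit_exponent_def sum_negf)
qed

lemma displacement_not_Ints_if_odd:
  assumes "odd q" "a < b"
  shows "\<exists>x\<in>{a..b}. (F ^^ q) x - x \<notin> \<int>"
proof (rule right_slope_ne_1_imp_displacement_not_Ints[OF right_slope_funpow _ assms(2)])
  have "orbit_exponent q a \<noteq> 0" using orbit_exponent_parity[of q a] assms(1) by auto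
  then show "L powr orbit_exponent q a \<noteq> 1" using L_gt_1 by simp
qed

lemma funpow_a1_if_funpow_a0:
  assumes "(F ^^ k) a0 = a1 + of_int m"
  shows "(F ^^ k) a1 = a0 + of_int (m - 1)"
proof -
  have "(F ^^ k) (- a1 + of_int (- m)) = - a0" using funpow_reflection[of k a0] assms by simp
  then have "(F ^^ k) (- a1) = of_int m - a0" using funpow_shift[of k "- a1" "- m"] by simp
  then have "F ((F ^^ k) a1) = F (a0 + of_int (m - 1))"
    using F_a1 F_a0 F_shift[of a0 "m - 1"] by (simp add: funpow_swap1)
  then show ?thesis by (simp add: strict_mono_eq[OF F_strict_mono])
qed

lemma a0_a1_not_same_orbit_if_odd:
  fixes q :: nat
  assumes "rho = of_int P / q" "odd q"
  shows "(F ^^ k) a0 - a1 \<notin> \<int>"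
proof
  assume "(F ^^ k) a0 - a1 \<in> \<int>"
  then obtain m where "(F ^^ k) a0 - a1 = of_int m" by (rule Ints_cases)
  then have m: "(F ^^ k) a0 = a1 + of_int m" by simp
  have "(F ^^ (2 * k)) a0 = (F ^^ k) ((F ^^ k) a0)" by (simp only: mult_2 funpow_add o_apply)
  also have "\<dots> = a0 + of_int (2 * m - 1)"
    using funpow_shift[of k a1 m] funpow_a1_if_funpow_a0[OF m] m by simp
  finally have period: "(F ^^ (2 * k)) a0 = a0 + of_int (2 * m - 1)" .
  show False
  proof (cases "k = 0")
    case True
    then have "real_of_int (2 * m - 1) = 0" using period by simp
    then have "2 * m - 1 = 0" by (simp only: of_int_eq_0_iff)
    then show False by presburger
  next
    case False
    then have "of_int (2 * m - 1) / real (2 * k) = of_int P / real q"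
      using rho_eq_if_periodic[OF _ period] assms(1) by simp
    then have "(2 * m - 1) * int q = P * int (2 * k)"
      using False assms(2) by (intro cross_mult_eq_if_frac_eq) (auto simp: odd_pos)
    moreover have "odd ((2 * m - 1) * int q)" using assms(2) by simp
    ultimately show False by simp
  qed
qed

end

section \<open>Rotation numbers with even denominator\<close>

locale even_rotation = break_lift +
  fixes s :: nat and j P :: int
  assumes s_pos: "s > 0" and P_eq: "P = 2 * j - 1" and rho_eq: "rho = of_int P / real (2 * s)"
begin

definition periodic :: "real \<Rightarrow> bool" where
  "periodic z \<longleftrightarrow> (F ^^ (2 * s)) z = z + of_int P"

lemma periodic_shift_iff: "periodic (z + of_int k) \<longleftrightarrow> periodic z"
  unfolding periodic_def by (simp add: funpow_shift)

lemma periodic_funpow_iff: "periodic ((F ^^ k) z) \<longleftrightarrow> periodic z"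
proof -
  have "(F ^^ (2 * s)) ((F ^^ k) z) = (F ^^ k) ((F ^^ (2 * s)) z)" by (rule funpow_commute)
  moreover have "(F ^^ k) z + of_int P = (F ^^ k) (z + of_int P)" by (simp add: funpow_shift)
  ultimately show ?thesis unfolding periodic_def by (simp add: funpow_eq_iff)
qed

lemma half_funpow_twice: "(F ^^ s) ((F ^^ s) z) = (F ^^ (2 * s)) z"
  by (simp only: mult_2 funpow_add o_apply)

lemma half_funpow_inverse:
  assumes "periodic z"
  shows "(F ^^ s) ((F ^^ s) z - of_int P) = z"
  using assms funpow_shift[of s "(F ^^ s) z" "- P"] unfolding periodic_def half_funpow_twice by simp

lemma half_funpow_uminus:
  assumes "periodic z"
  shows "(F ^^ s) (- z) = of_int P - (F ^^ s) z"
  using funpow_reflection[of s "(F ^^ s) z - of_int P"] half_funpow_inverse[OF assms] by simp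

lemma periodic_uminus:
  assumes "periodic z"
  shows "periodic (- z)"
proof -
  have "(F ^^ (2 * s)) (z - of_int P) = z"
    using assms funpow_shift[of "2 * s" z "- P"] unfolding periodic_def by simp
  then show ?thesis
    using funpow_reflection[of "2 * s" "z - of_int P"] unfolding periodic_def by simp
qed

lemma periodic_reflect: "periodic z \<Longrightarrow> periodic (of_int k - F z)"
  using periodic_uminus periodic_funpow_iff[of 1 z] periodic_shift_iff[of "- F z" k]
  by (simp add: add.commute)

lemma closed_periodic: "closed {z. periodic z}"
  unfolding periodic_def by (intro closed_Collect_eq continuous_intros continuous_on_funpow)

lemma periodic_exists: "\<exists>z. periodic z"
  using periodic_point_exists[of "2 * s" P] s_pos rho_eq unfolding periodic_def by auto

lemma F_half_funpow_if_reflection_fixed: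
  assumes "periodic z" "F z = of_int c - z"
  shows "F ((F ^^ s) z) = of_int (c + P) - (F ^^ s) z"
proof -
  have "F ((F ^^ s) z) = (F ^^ s) (F z)" by (rule funpow_swap1)
  also have "F z = - z + of_int c" using assms(2) by simp
  also have "(F ^^ s) (- z + of_int c) = (F ^^ s) (- z) + of_int c" by (rule funpow_shift)
  also have "(F ^^ s) (- z) = of_int P - (F ^^ s) z" by (rule half_funpow_uminus[OF assms(1)])
  finally show ?thesis by simp
qed

lemma half_funpow_a0: "periodic a0 \<Longrightarrow> (F ^^ s) a0 = a1 + of_int j"
  using F_half_funpow_if_reflection_fixed[of a0 1] F_a0 P_eq by (intro eq_a1_if_F_eq) simp

lemma half_funpow_a1: "periodic a1 \<Longrightarrow> (F ^^ s) a1 = a0 + of_int (j - 1)"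
  using F_half_funpow_if_reflection_fixed[of a1 0] F_a1 P_eq by (intro eq_a0_if_F_eq) simp

lemma periodic_a0_if_periodic_a1: "periodic a1 \<Longrightarrow> periodic a0"
  using half_funpow_a1 periodic_funpow_iff[of s a1] periodic_shift_iff[of a0 "j - 1"] by simp

lemma slope_exponent_half_swap_if_periodic_a0:
  assumes "periodic a0"
  shows "slope_exponent ((F ^^ s) z) = - slope_exponent z"
proof -
  define n where "n = \<lfloor>z - a1\<rfloor>"
  define w where "w = z - of_int n"
  have w: "a1 \<le> w" "w < a1 + 1" unfolding w_def n_def by linarith+
  have G: "(F ^^ s) a0 = a1 + of_int j" "(F ^^ s) a1 = a0 + of_int (j - 1)"
    "(F ^^ s) (a1 + 1) = a0 + of_int j"
    using half_funpow_a0[OF assms] funpow_a1_if_funpow_a0 funpow_shift[of s a1 1] by auto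
  have "slope_exponent ((F ^^ s) w) = - slope_exponent w"
  proof (cases "w < a0")
    case True
    have "a0 + of_int (j - 1) \<le> (F ^^ s) w" "(F ^^ s) w < a1 + of_int (j - 1) + 1"
      using G w True funpow_le_iff[of s a1 w] funpow_less_iff[of s w a0] by simp_all
    then show ?thesis
      using slope_exponent_expanding[of "j - 1"] slope_exponent_contracting[of 0 w] w True by simp
  next
    case False
    have "a1 + of_int j \<le> (F ^^ s) w" "(F ^^ s) w < a0 + of_int j"
      using G w False funpow_le_iff[of s a0 w] funpow_less_iff[of s w "a1 + 1"] by simp_all
    then show ?thesis
      using slope_exponent_contracting[of j] slope_exponent_expanding[of 0 w] w False by simp
  qed
  then show ?thesis
    using slope_exponent_funpow_shift[of s w n] slope_exponent_shift[of w n] unfolding w_def by simp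
qed

lemma all_periodic_if_periodic_a0:
  assumes "periodic a0"
  shows "periodic x"
proof -
  have "right_slope (F ^^ (2 * s)) 1 y" for y
    using right_slope_funpow[of "2 * s" y] L_gt_1
      orbit_exponent_double_eq_0[OF slope_exponent_half_swap_if_periodic_a0[OF assms]] by simp
  then have "(F ^^ (2 * s)) x - x = (F ^^ (2 * s)) a0 - a0"
    using right_slope_1_imp_displacement_eq[OF continuous_on_funpow]
    by (cases "a0 \<le> x") (auto simp: not_le intro: sym)
  then show ?thesis using assms unfolding periodic_def by simp
qed

text \<open>Towards a contradiction, \<open>(u, v)\<close> is a gap of the periodic set around a non-periodic \<open>a0\<close>.\<close>

context
  fixes u v :: real
  assumes periodic_u: "periodic u" and periodic_v: "periodic v"
    and u_less_a0: "u < a0" and a0_less_v: "a0 < v"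
    and gap: "\<And>w. periodic w \<Longrightarrow> w \<le> u \<or> v \<le> w"
begin

lemma not_periodic_a0: "\<not> periodic a0"
  using gap[of a0] u_less_a0 a0_less_v by auto

lemma not_periodic_a1: "\<not> periodic a1"
  using not_periodic_a0 periodic_a0_if_periodic_a1 by blast

lemma F_gap_ends: "F u = 1 - v" "F v = 1 - u"
proof -
  have decreasing: "1 - F y < 1 - F x" if "x < y" for x y
    using F_strict_mono[THEN strict_monoD, OF that] by simp
  have involution: "1 - F (1 - F x) = x" for x
    using F_reflection[of x] F_shift[of "- F x" 1] by simp
  have invariant: "1 - F w \<in> {w. periodic w}" if "w \<in> {w. periodic w}" for w
    using periodic_reflect[of w 1] that by simp
  have "1 - F a0 = a0" "u \<in> {w. periodic w}" "v \<in> {w. periodic w}"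
    "\<And>w. w \<in> {w. periodic w} \<Longrightarrow> w \<le> u \<or> v \<le> w"
    using F_a0 periodic_u periodic_v gap by auto
  then have "1 - F u = v"
    using involution_swaps_gap_ends[OF decreasing involution invariant] u_less_a0 a0_less_v by blast
  then show "F u = 1 - v" "F v = 1 - u" using involution[of u] by auto
qed

text \<open>The gap \<open>(u', v')\<close> of the periodic set around \<open>a1\<close>: the image of \<open>(u, v)\<close> under
  half a period, translated back by \<open>j\<close>.\<close>

definition u' :: real where "u' = (F ^^ s) u - of_int j"
definition v' :: real where "v' = (F ^^ s) v - of_int j"

lemma F_gap'_ends: "F u' = - v'" "F v' = - u'"
proof -
  have *: "F ((F ^^ s) w - of_int j) = - ((F ^^ s) w' - of_int j)"
    if "F w = 1 - w'" "periodic w'" for w w'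
  proof -
    have "F ((F ^^ s) w - of_int j) = (F ^^ s) (F w) - of_int j"
      using F_shift[of "(F ^^ s) w" "- j"] by (simp add: funpow_swap1)
    also have "F w = - w' + of_int 1" using that(1) by simp
    also have "(F ^^ s) (- w' + of_int 1) = (F ^^ s) (- w') + of_int 1" by (rule funpow_shift)
    also have "(F ^^ s) (- w') = of_int P - (F ^^ s) w'" by (rule half_funpow_uminus[OF that(2)])
    finally show ?thesis using P_eq by simp
  qed
  show "F u' = - v'" "F v' = - u'"
    unfolding u'_def v'_def using *[OF F_gap_ends(1) periodic_v] *[OF F_gap_ends(2) periodic_u] by auto
qed

lemma u'_less_v': "u' < v'"
  unfolding u'_def v'_def using u_less_a0 a0_less_v funpow_less_iff[of s u v] by simp

lemma u'_less_a1: "u' < a1"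
proof (rule ccontr)
  assume "\<not> u' < a1"
  then have "F a1 \<le> F u'" using F_strict_mono by (simp add: strict_mono_less_eq)
  then show False using \<open>\<not> u' < a1\<close> F_a1 F_gap'_ends(1) u'_less_v' by linarith
qed

lemma a1_less_v': "a1 < v'"
proof (rule ccontr)
  assume "\<not> a1 < v'"
  then have "F v' \<le> F a1" using F_strict_mono by (simp add: strict_mono_less_eq)
  then show False using \<open>\<not> a1 < v'\<close> F_a1 F_gap'_ends(2) u'_less_v' by linarith
qed

lemma half_funpow_u: "(F ^^ s) u = u' + of_int j"
  unfolding u'_def by simp

lemma half_funpow_v: "(F ^^ s) v = v' + of_int j"
  unfolding v'_def by simp

lemma half_funpow_gap'_ends: "(F ^^ s) u' = u + of_int (j - 1)" "(F ^^ s) v' = v + of_int (j - 1)"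
proof -
  have "(F ^^ s) ((F ^^ s) w - of_int j) = w + of_int (j - 1)" if "periodic w" for w
    using half_funpow_inverse[OF that] funpow_shift[of s "(F ^^ s) w - of_int P" "P - j"] P_eq
    by simp
  then show "(F ^^ s) u' = u + of_int (j - 1)" "(F ^^ s) v' = v + of_int (j - 1)"
    unfolding u'_def v'_def using periodic_u periodic_v by auto
qed

lemma periodic_outside_gap': "periodic w \<Longrightarrow> w \<le> u' \<or> v' \<le> w"
proof (rule ccontr)
  assume "periodic w" and "\<not> (w \<le> u' \<or> v' \<le> w)"
  define w' where "w' = (F ^^ s) (w + of_int j) - of_int P"
  have "periodic w'"
    using \<open>periodic w\<close> periodic_shift_iff[of _ j] periodic_funpow_iff[of s] periodic_shift_iff[of _ "- P"]
    unfolding w'_def by simp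
  moreover have "(F ^^ s) w' = w + of_int j"
    unfolding w'_def using half_funpow_inverse \<open>periodic w\<close> periodic_shift_iff by blast
  then have "u < w'" "w' < v"
    using \<open>\<not> (w \<le> u' \<or> v' \<le> w)\<close> half_funpow_u half_funpow_v funpow_less_iff[of s]
    by (metis add_strict_right_mono not_le)+
  ultimately show False using gap by fastforce
qed

lemma slope_exponent_half_swap_in_gap:
  assumes "periodic z"
  shows "slope_exponent ((F ^^ s) z) = - slope_exponent z"
proof -
  define n where "n = \<lfloor>z - a1\<rfloor>"
  define w where "w = z - of_int n"
  have w: "a1 \<le> w" "w < a1 + 1" unfolding w_def n_def by linarith+
  have "periodic w" using assms periodic_shift_iff[of w n] unfolding w_def by simp
  then have "w \<noteq> a0" "w \<noteq> a1" using not_periodic_a0 not_periodic_a1 by auto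
  have "slope_exponent ((F ^^ s) w) = - slope_exponent w"
  proof (cases "w < a0")
    case True
    have "w \<le> u" "v' \<le> w"
      using gap[OF \<open>periodic w\<close>] periodic_outside_gap'[OF \<open>periodic w\<close>] True w a0_less_v u'_less_a1 by fastforce+
    then have "a0 + of_int (j - 1) \<le> (F ^^ s) w" "(F ^^ s) w < a1 + of_int (j - 1) + 1"
      using funpow_le_iff[of s v' w] funpow_le_iff[of s w u] half_funpow_gap'_ends half_funpow_u
        a0_less_v u'_less_a1 by simp_all
    then show ?thesis
      using slope_exponent_expanding[of "j - 1"] slope_exponent_contracting[of 0 w] w True by simp
  next
    case False
    then have "a0 < w" using \<open>w \<noteq> a0\<close> by simp
    have "periodic (w + of_int (- 1))" using \<open>periodic w\<close> periodic_shift_iff by blast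
    then have "v \<le> w" "w \<le> u' + 1"
      using gap[OF \<open>periodic w\<close>] periodic_outside_gap'[of "w - 1"] \<open>a0 < w\<close> w u_less_a0 a1_less_v' by fastforce+
    moreover have "(F ^^ s) (u' + 1) = u + of_int j"
      using half_funpow_gap'_ends(1) funpow_shift[of s u' 1] by simp
    ultimately have "a1 + of_int j \<le> (F ^^ s) w" "(F ^^ s) w < a0 + of_int j"
      using funpow_le_iff[of s v w] funpow_le_iff[of s w "u' + 1"] half_funpow_v
        a1_less_v' u_less_a0 by simp_all
    then show ?thesis
      using slope_exponent_contracting[of j] slope_exponent_expanding[of 0 w] w \<open>a0 < w\<close> by simp
  qed
  then show ?thesis
    using slope_exponent_funpow_shift[of s w n] slope_exponent_shift[of w n] unfolding w_def by simp
qed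

lemma no_gap_around_a0: False
proof -
  have "orbit_exponent (2 * s) u = 0"
    using periodic_u periodic_funpow_iff
    by (intro orbit_exponent_double_eq_0 slope_exponent_half_swap_in_gap) blast
  then have "right_slope (F ^^ (2 * s)) 1 u" using right_slope_funpow[of "2 * s" u] L_gt_1 by simp
  then obtain \<delta> where \<delta>: "\<delta> > 0"
      "\<And>y. u \<le> y \<Longrightarrow> y \<le> u + \<delta> \<Longrightarrow> (F ^^ (2 * s)) y - (F ^^ (2 * s)) u = 1 * (y - u)"
    unfolding right_slope_def by blast
  define y where "y = u + min \<delta> ((v - u) / 2)"
  have y: "u < y" "y < v" "y \<le> u + \<delta>"
    using \<delta>(1) u_less_a0 a0_less_v by (auto simp: y_def min_def field_simps)
  then have "periodic y" using \<delta>(2)[of y] periodic_u unfolding periodic_def by simp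
  then show False using gap y by fastforce
qed

end

lemma periodic_a0: "periodic a0"
proof (rule ccontr)
  assume "\<not> periodic a0"
  obtain z where "periodic z" using periodic_exists by blast
  have "closed {w. periodic w}" "z \<in> {w. periodic w}"
    "\<And>w k. w \<in> {w. periodic w} \<Longrightarrow> w + of_int k \<in> {w. periodic w}" "a0 \<notin> {w. periodic w}"
    using closed_periodic \<open>periodic z\<close> \<open>\<not> periodic a0\<close> periodic_shift_iff by auto
  then obtain u v where "periodic u" "periodic v" "u < a0" "a0 < v" "\<And>w. periodic w \<Longrightarrow> w \<le> u \<or> v \<le> w"
    by (rule gap_around_point) auto
  then show False by (rule no_gap_around_a0)
qed

lemma all_periodic: "periodic x"
  by (rule all_periodic_if_periodic_a0[OF periodic_a0])

end

context break_lift
begin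

lemma rational_rotation_even:
  assumes rot: "rot_number F = real p / real q" and "q > 0" "even q" "coprime p q"
  shows "(\<forall>x. same_pt ((F ^^ q) x) x)
    \<and> (\<forall>x k. 0 < k \<and> k < q \<longrightarrow> \<not> same_pt ((F ^^ k) x) x)
    \<and> (\<exists>k. same_pt ((F ^^ k) a0) a1)"
proof -
  define P where "P = \<lfloor>rho\<rfloor> * int q + int p"
  have rho: "rho = of_int P / real q" unfolding P_def by (rule rho_eq_of_rot_number[OF rot \<open>q > 0\<close>])
  have "gcd (int q) P = gcd (int q) (int p)" unfolding P_def by (rule gcd_add_mult)
  then have coprime: "coprime P (int q)"
    using \<open>coprime p q\<close> by (simp add: coprime_iff_gcd_eq_1 gcd.commute)
  obtain s where q: "q = 2 * s" using \<open>even q\<close> by blast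
  have "odd P"
  proof
    assume "even P"
    then show False using coprime_common_divisor[OF coprime, of 2] q by simp
  qed
  then obtain b where "P = 2 * b + 1" by (rule oddE)
  then interpret even_rotation a0 a1 L F s "b + 1" P
    by unfold_locales (use \<open>q > 0\<close> rho q in simp_all)
  have "(F ^^ q) x = x + of_int P" for x using all_periodic[of x] unfolding periodic_def q by simp
  then show ?thesis
    unfolding same_pt_def using displacement_not_Ints_below_period[OF rho coprime]
      half_funpow_a0[OF periodic_a0] by (auto intro!: exI[of _ s])
qed

lemma rational_rotation_odd:
  assumes rot: "rot_number F = real p / real q" and "odd q"
  shows "(\<forall>a b. a < b \<and> b \<le> a + 1 \<longrightarrow> (\<exists>x\<in>{a..b}. \<not> same_pt ((F ^^ q) x) x))
    \<and> (\<forall>k. \<not> same_pt ((F ^^ k) a0) a1)"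
  using displacement_not_Ints_if_odd[OF \<open>odd q\<close>]
    a0_a1_not_same_orbit_if_odd[OF rho_eq_of_rot_number[OF rot odd_pos[OF \<open>odd q\<close>]] \<open>odd q\<close>]
  unfolding same_pt_def by auto

end

section \<open>The internal-wave return map\<close>

lemma iw_break_lift:
  fixes l \<alpha> \<theta> :: real
  assumes "0 < \<alpha>" "\<alpha> < \<theta>" "\<theta> < pi / 2"
  shows "break_lift (iw_a0 l \<theta>) (iw_a1 l \<alpha> \<theta>) (iw_Lambda \<alpha> \<theta>) (iw_lift l \<alpha> \<theta>)"
proof -
  define S C s c where "S = sin \<theta>" "C = cos \<theta>" "s = sin \<alpha>" "c = cos \<alpha>"
  have pos: "S > 0" "C > 0" "s > 0" "c > 0"
    unfolding S_C_s_c_def using assms by (auto intro!: sin_gt_zero cos_gt_zero_pi)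
  have "sin (\<theta> - \<alpha>) > 0" using assms by (intro sin_gt_zero) auto
  then have D: "S * c - C * s > 0" unfolding S_C_s_c_def by (simp add: sin_diff)
  have Lambda: "iw_Lambda \<alpha> \<theta> = (S * c + C * s) / (S * c - C * s)"
    unfolding iw_Lambda_def S_C_s_c_def by (simp add: sin_add sin_diff)
  have d: "iw_a0 l \<theta> - iw_a1 l \<alpha> \<theta> = (S * c + C * s) / (2 * (S * c))"
    unfolding iw_a0_def iw_a1_def S_C_s_c_def tan_def using pos unfolding S_C_s_c_def
    by (simp add: field_simps)
  have one_minus_d: "1 - (iw_a0 l \<theta> - iw_a1 l \<alpha> \<theta>) = (S * c - C * s) / (2 * (S * c))"
    unfolding d using pos by (simp add: field_simps)
  show ?thesis
  proof
    show "iw_Lambda \<alpha> \<theta> > 1" unfolding Lambda using D pos by (simp add: less_divide_eq)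
    have "0 < (S * c + C * s) / (2 * (S * c))"
      using pos by (intro divide_pos_pos add_pos_pos mult_pos_pos) auto
    then show "iw_a1 l \<alpha> \<theta> < iw_a0 l \<theta>" using d by linarith
    have "0 < (S * c - C * s) / (2 * (S * c))"
      using pos D by (intro divide_pos_pos mult_pos_pos) auto
    then show "iw_a0 l \<theta> < iw_a1 l \<alpha> \<theta> + 1" using one_minus_d by linarith
    have "iw_Lambda \<alpha> \<theta> * (1 - (iw_a0 l \<theta> - iw_a1 l \<alpha> \<theta>))
        = (S * c + C * s) / (S * c - C * s) * ((S * c - C * s) / (2 * (S * c)))"
      by (simp only: one_minus_d Lambda)
    also have "\<dots> = iw_a0 l \<theta> - iw_a1 l \<alpha> \<theta>" using D d by simp
    finally show "iw_a0 l \<theta> - iw_a1 l \<alpha> \<theta>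
        = iw_Lambda \<alpha> \<theta> * (1 - (iw_a0 l \<theta> - iw_a1 l \<alpha> \<theta>))" ..
  qed (simp add: iw_lift_def Let_def)
qed

theorem proposition3p1:
  fixes l \<alpha> \<theta> :: real and p q :: nat
  assumes hl: "l > 0"
    and h\<alpha>: "0 < \<alpha>" and h\<alpha>\<theta>: "\<alpha> < \<theta>" and h\<theta>: "\<theta> < pi / 2"
    and h\<theta>2: "\<theta> \<ge> arctan (2 * l + tan \<alpha>)"
    and hpq: "(p > 0 \<and> q > 0 \<and> coprime p q) \<or> (p = 0 \<and> q = 1)"
    and hrot: "rot_number (iw_lift l \<alpha> \<theta>) = real p / real q"
  shows
    "(even q \<longrightarrow>
        (\<forall>x. same_pt ((iw_lift l \<alpha> \<theta> ^^ q) x) x)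
      \<and> (\<forall>x. \<forall>k. 0 < k \<and> k < q \<longrightarrow> \<not> same_pt ((iw_lift l \<alpha> \<theta> ^^ k) x) x)
      \<and> (\<exists>k. same_pt ((iw_lift l \<alpha> \<theta> ^^ k) (iw_a0 l \<theta>)) (iw_a1 l \<alpha> \<theta>)))
   \<and> (odd q \<longrightarrow>
        (\<forall>a b. a < b \<and> b \<le> a + 1 \<longrightarrow>
            (\<exists>x\<in>{a..b}. \<not> same_pt ((iw_lift l \<alpha> \<theta> ^^ q) x) x))
      \<and> (\<forall>k. \<not> same_pt ((iw_lift l \<alpha> \<theta> ^^ k) (iw_a0 l \<theta>)) (iw_a1 l \<alpha> \<theta>)))"
proof -
  \<comment> \<open>\<open>hl\<close> and \<open>h\<theta>2\<close> only place the break points in \<open>(-1/2, 1/2)\<close>; the lift does not need that\<close>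
  interpret break_lift "iw_a0 l \<theta>" "iw_a1 l \<alpha> \<theta>" "iw_Lambda \<alpha> \<theta>" "iw_lift l \<alpha> \<theta>"
    using h\<alpha> h\<alpha>\<theta> h\<theta> by (rule iw_break_lift)
  have "q > 0" using hpq by auto
  show ?thesis using rational_rotation_even[OF hrot \<open>q > 0\<close>] rational_rotation_odd[OF hrot] hpq by auto
qed

end
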